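(* Let $E$ be a real or complex Banach space, $T$ a strongly continuous semigroup on $E$, $\mathcal U$ a countably incomplete ultrafilter on a set $I$, and ${}^*$ the corresponding bounded ultrapower. Let $\Phi:\ell^\infty_I(E)/c_{\mathcal U}\to\widehat E$, $\Phi(\langle f_i\rangle+c_{\mathcal U})=\widehat f$ ($f$ the $\mathcal U$-class of $\langle f_i\rangle$). Then $\widehat E_{\max}=\Phi\big(\{x\in\ell^\infty_I(E)/c_{\mathcal U}:\lim_{t\to0}\|\tilde T(t)x-x\|=0\}\big)$, i.e. $\widehat E_{\max}$ corresponds to the maximal continuous subspace of $\ell^\infty_I(E)/c_{\mathcal U}$ with respect to $\tilde T$.
   Context: A semigroup is a map $T:[0,\infty)\to\mathcal L(E)$ with $T(0)=\mathrm{Id}$, $T(s+t)=T(s)T(t)$; strongly continuous means $\lim_{t\to0}\|T(t)f-f\|=0$ for all $f$. $\ell^\infty_I(E)$: bounded families in $E$ with sup-norm; $c_{\mathcal U}$: families with: for every $\varepsilon>0$ some $J\in\mathcal U$ has $\|f_i\|<\varepsilon$ for $i\in J$; quotient norm on $\ell^\infty_I(E)/c_{\mathcal U}$; $\tilde T(t)\langle f_i\rangle=\langle T(t)f_i\rangle$, induced also on the quotient. In the bounded ultrapower, ${}^*E$ consists of $\mathcal U$-classes of $I$-sequences in $E$. A nonstandard element is finite if its norm is bounded by a standard natural number, infinitesimal if its norm is below every standard $1/n$. $\widehat E=\mathrm{fin}({}^*E)/E_0$ (finite elements modulo infinitesimal ones), class map $f\mapsto\widehat f$, norm $\mathrm{st}(\|f\|)$.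 $E_{\max}$ is the set of finite $f\in{}^*E$ such that for every standard $\varepsilon>0$ there is standard $\delta>0$ with $\|{}^*T(t)f-f\|<\varepsilon$ for all positive standard $t<\delta$; $\widehat E_{\max}=E_{\max}/E_0$. *)

theory Defs
  imports "HOL-Analysis.Analysis"
begin

definition sc_semigroup :: "(real \<Rightarrow> 'e::banach \<Rightarrow> 'e) \<Rightarrow> bool" where
  "sc_semigroup T \<longleftrightarrow>
     (\<forall>t\<ge>0. bounded_linear (T t)) \<and>
     T 0 = id \<and>
     (\<forall>s t. s \<ge> 0 \<longrightarrow> t \<ge> 0 \<longrightarrow> T (s + t) = T s \<circ> T t) \<and>
     (\<forall>f. ((\<lambda>t. T t f) \<longlongrightarrow> f) (at_right 0))"

definition ultrafilter_on :: "'i set \<Rightarrow> 'i set set \<Rightarrow> bool" where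
  "ultrafilter_on I U \<longleftrightarrow>
     U \<subseteq> Pow I \<and> I \<in> U \<and> {} \<notin> U \<and>
     (\<forall>A\<in>U. \<forall>B\<in>U. A \<inter> B \<in> U) \<and>
     (\<forall>A\<in>U. \<forall>B. A \<subseteq> B \<and> B \<subseteq> I \<longrightarrow> B \<in> U) \<and>
     (\<forall>A. A \<subseteq> I \<longrightarrow> A \<in> U \<or> I - A \<in> U)"

definition countably_incomplete :: "'i set set \<Rightarrow> bool" where
  "countably_incomplete U \<longleftrightarrow> (\<exists>J :: nat \<Rightarrow> 'i set. (\<forall>n. J n \<in> U) \<and> \<Inter>(range J) \<notin> U)"

text \<open>Families indexed by I (values outside I are irrelevant).\<close>
definition lbounded :: "'i set \<Rightarrow> ('i \<Rightarrow> 'e::real_normed_vector) \<Rightarrow> bool" where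
  "lbounded I f \<longleftrightarrow> (\<exists>B. \<forall>i\<in>I. norm (f i) \<le> B)"

definition cU :: "'i set \<Rightarrow> 'i set set \<Rightarrow> ('i \<Rightarrow> 'e::real_normed_vector) \<Rightarrow> bool" where
  "cU I U f \<longleftrightarrow> lbounded I f \<and> (\<forall>\<epsilon>>0. \<exists>J\<in>U. \<forall>i\<in>J. norm (f i) < \<epsilon>)"

definition supnorm :: "'i set \<Rightarrow> ('i \<Rightarrow> 'e::real_normed_vector) \<Rightarrow> real" where
  "supnorm I f = (SUP i\<in>I. norm (f i))"

definition qnorm :: "'i set \<Rightarrow> 'i set set \<Rightarrow> ('i \<Rightarrow> 'e::real_normed_vector) \<Rightarrow> real" where
  "qnorm I U g = (INF c\<in>{c. cU I U c}. supnorm I (\<lambda>i. g i - c i))"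

definition qclass :: "'i set \<Rightarrow> 'i set set \<Rightarrow> ('i \<Rightarrow> 'e::real_normed_vector) \<Rightarrow> ('i \<Rightarrow> 'e) set" where
  "qclass I U g = {h. lbounded I h \<and> cU I U (\<lambda>i. h i - g i)}"

text \<open>Nonstandard notions in the bounded ultrapower, via representing I-families.
  The nonstandard norm of f is the U-class of (norm (f i)).\<close>
definition ns_finite :: "'i set \<Rightarrow> 'i set set \<Rightarrow> ('i \<Rightarrow> 'e::real_normed_vector) \<Rightarrow> bool" where
  "ns_finite I U f \<longleftrightarrow> (\<exists>n::nat. {i\<in>I. norm (f i) \<le> real n} \<in> U)"

definition ns_infinitesimal :: "'i set \<Rightarrow> 'i set set \<Rightarrow> ('i \<Rightarrow> 'e::real_normed_vector) \<Rightarrow> bool" where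
  "ns_infinitesimal I U f \<longleftrightarrow> (\<forall>n::nat. n > 0 \<longrightarrow> {i\<in>I. norm (f i) < 1 / real n} \<in> U)"

text \<open>The class of f in E-hat = fin(*E)/E_0 (as a set of representing families).\<close>
definition hatclass :: "'i set \<Rightarrow> 'i set set \<Rightarrow> ('i \<Rightarrow> 'e::real_normed_vector) \<Rightarrow> ('i \<Rightarrow> 'e) set" where
  "hatclass I U f = {g. ns_finite I U g \<and> ns_infinitesimal I U (\<lambda>i. g i - f i)}"

text \<open>E_max: finite f with: for every standard eps>0 there is standard delta>0 such that
  the nonstandard norm of *T(t) f - f is < eps for all standard 0<t<delta.\<close>
definition Emax :: "'i set \<Rightarrow> 'i set set \<Rightarrow> (real \<Rightarrow> 'e::real_normed_vector \<Rightarrow> 'e) \<Rightarrow> ('i \<Rightarrow> 'e) set" where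
  "Emax I U T = {f. ns_finite I U f \<and>
     (\<forall>\<epsilon>>0. \<exists>\<delta>>0. \<forall>t. 0 < t \<and> t < \<delta> \<longrightarrow> {i\<in>I. norm (T t (f i) - f i) < \<epsilon>} \<in> U)}"

definition Emax_hat :: "'i set \<Rightarrow> 'i set set \<Rightarrow> (real \<Rightarrow> 'e::real_normed_vector \<Rightarrow> 'e) \<Rightarrow> ('i \<Rightarrow> 'e) set set" where
  "Emax_hat I U T = hatclass I U ` Emax I U T"

definition Phi :: "'i set \<Rightarrow> 'i set set \<Rightarrow> ('i \<Rightarrow> 'e::real_normed_vector) set \<Rightarrow> ('i \<Rightarrow> 'e) set" where
  "Phi I U X = hatclass I U (SOME g. g \<in> X)"

end

theory Submission
  imports Defs
begin

text \<open>For a bounded family \<open>x\<close>, the quotient norm of \<open>x + c\<^sub>U\<close> is the \<open>U\<close>-limit of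
  \<open>norm (x i)\<close>: changing \<open>x\<close> off a set of \<open>U\<close> is a \<open>c\<^sub>U\<close>-perturbation, and a
  \<open>c\<^sub>U\<close>-perturbation is uniformly small on a set of \<open>U\<close>. So convergence of
  \<open>T(t)x - x\<close> to \<open>0\<close> in the quotient is exactly the condition defining \<open>E\<^sub>m\<^sub>a\<^sub>x\<close> for the
  class of \<open>x\<close>. The map \<open>\<Phi>\<close> sends \<open>x + c\<^sub>U\<close> to the class of \<open>x\<close> since \<open>c\<^sub>U\<close> consists of
  infinitesimals, and every finite element agrees on a set of \<open>U\<close> with a bounded family.\<close>

lemma ultrafilter_on_carrier: "ultrafilter_on I U \<Longrightarrow> I \<in> U"
  unfolding ultrafilter_on_def by blast

lemma ultrafilter_on_nonempty: "ultrafilter_on I U \<Longrightarrow> A \<in> U \<Longrightarrow> A \<noteq> {}"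
  unfolding ultrafilter_on_def by blast

lemma ultrafilter_on_subset: "ultrafilter_on I U \<Longrightarrow> A \<in> U \<Longrightarrow> A \<subseteq> I"
  unfolding ultrafilter_on_def by blast

lemma ultrafilter_on_mono: "ultrafilter_on I U \<Longrightarrow> A \<in> U \<Longrightarrow> A \<subseteq> B \<Longrightarrow> B \<subseteq> I \<Longrightarrow> B \<in> U"
  unfolding ultrafilter_on_def by blast

lemma ultrafilter_on_Int_mono:
  "ultrafilter_on I U \<Longrightarrow> A \<in> U \<Longrightarrow> B \<in> U \<Longrightarrow> A \<inter> B \<subseteq> C \<Longrightarrow> C \<subseteq> I \<Longrightarrow> C \<in> U"
  unfolding ultrafilter_on_def by blast

lemma lbounded_diff: "lbounded I x \<Longrightarrow> lbounded I y \<Longrightarrow> lbounded I (\<lambda>i. x i - y i)"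
  unfolding lbounded_def by (meson add_mono norm_triangle_ineq4 order_trans)

lemma lbounded_bounded_linear:
  assumes "bounded_linear L" and "lbounded I x"
  shows "lbounded I (\<lambda>i. L (x i))"
proof -
  obtain K where "\<And>v. norm (L v) \<le> norm v * K" "K > 0"
    using bounded_linear.pos_bounded[OF assms(1)] by blast
  with assms(2) show ?thesis
    unfolding lbounded_def by (meson less_imp_le mult_right_mono order_trans)
qed

lemma lbounded_imp_ns_finite:
  assumes "ultrafilter_on I U" and "lbounded I x"
  shows "ns_finite I U x"
proof -
  obtain B where "\<forall>i\<in>I. norm (x i) \<le> B" using assms(2) unfolding lbounded_def by blast
  then have "{i\<in>I. norm (x i) \<le> real (nat \<lceil>B\<rceil>)} = I"
    using real_nat_ceiling_ge order_trans by blast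
  then show ?thesis
    unfolding ns_finite_def using ultrafilter_on_carrier[OF assms(1)] by metis
qed

lemma ns_finite_obtain_lbounded:
  assumes "ultrafilter_on I U" and "ns_finite I U x"
  obtains y where "lbounded I y" and "{i\<in>I. x i = y i} \<in> U"
proof -
  obtain n :: nat where n: "{i\<in>I. norm (x i) \<le> real n} \<in> U"
    using assms(2) unfolding ns_finite_def by blast
  define y where "y i = (if norm (x i) \<le> real n then x i else 0)" for i
  have "lbounded I y"
    unfolding lbounded_def y_def by (rule exI[of _ "real n"]) auto
  moreover have "{i\<in>I. x i = y i} \<in> U"
    using n by (rule ultrafilter_on_mono[OF assms(1)]) (auto simp: y_def)
  ultimately show ?thesis using that by blast
qed

lemma supnorm_upper:
  assumes "lbounded I x" and "i \<in> I"
  shows "norm (x i) \<le> supnorm I x"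
proof -
  have "bdd_above ((\<lambda>i. norm (x i)) ` I)"
    using assms(1) unfolding lbounded_def by (auto intro: bdd_aboveI2)
  then show ?thesis unfolding supnorm_def using assms(2) by (rule cSUP_upper2) auto
qed

lemma supnorm_least: "I \<noteq> {} \<Longrightarrow> (\<And>i. i \<in> I \<Longrightarrow> norm (x i) \<le> e) \<Longrightarrow> supnorm I x \<le> e"
  unfolding supnorm_def by (intro cSUP_least) auto

lemma supnorm_nonneg:
  assumes "lbounded I x" and "I \<noteq> {}"
  shows "0 \<le> supnorm I x"
proof -
  obtain i where "i \<in> I" using assms(2) by blast
  then have "norm (x i) \<le> supnorm I x" by (rule supnorm_upper[OF assms(1)])
  then show ?thesis using norm_ge_zero[of "x i"] by linarith
qed

lemma cU_zero: "ultrafilter_on I U \<Longrightarrow> cU I U (\<lambda>i. 0)"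
  unfolding cU_def lbounded_def using ultrafilter_on_carrier by fastforce

lemma supnorm_diff_cU_nonneg:
  assumes "ultrafilter_on I U" and "lbounded I x" and "cU I U c"
  shows "0 \<le> supnorm I (\<lambda>i. x i - c i)"
  using assms supnorm_nonneg lbounded_diff ultrafilter_on_nonempty ultrafilter_on_carrier
  unfolding cU_def by blast

lemma qnorm_bdd_below:
  assumes "ultrafilter_on I U" and "lbounded I x"
  shows "bdd_below ((\<lambda>c. supnorm I (\<lambda>i. x i - c i)) ` {c. cU I U c})"
  using supnorm_diff_cU_nonneg[OF assms] by (intro bdd_belowI2[where m = 0]) simp

lemma qnorm_nonneg:
  assumes "ultrafilter_on I U" and "lbounded I x"
  shows "0 \<le> qnorm I U x"
  unfolding qnorm_def using cU_zero[OF assms(1)] supnorm_diff_cU_nonneg[OF assms]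
  by (intro cINF_greatest) auto

lemma qnorm_le_if_small_on_U:
  assumes U: "ultrafilter_on I U" and x: "lbounded I x"
    and small: "{i\<in>I. norm (x i) < e} \<in> U"
  shows "qnorm I U x \<le> e"
proof -
  define J where "J = {i\<in>I. norm (x i) < e}"
  define c where "c i = (if i \<in> J then 0 else x i)" for i
  have "e > 0"
    using ultrafilter_on_nonempty[OF U small] by (auto intro: le_less_trans[OF norm_ge_zero])
  have "lbounded I c"
    using x unfolding lbounded_def c_def by (auto intro: order_trans[OF norm_ge_zero])
  moreover have "J \<in> U" using small J_def by simp
  then have "\<forall>\<epsilon>>0. \<exists>J\<in>U. \<forall>i\<in>J. norm (c i) < \<epsilon>" by (auto simp: c_def)
  ultimately have "cU I U c" unfolding cU_def by blast
  then have "qnorm I U x \<le> supnorm I (\<lambda>i. x i - c i)"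
    unfolding qnorm_def by (intro cINF_lower qnorm_bdd_below[OF U x]) simp
  also have "\<dots> \<le> e"
    using \<open>e > 0\<close> ultrafilter_on_nonempty[OF U ultrafilter_on_carrier[OF U]]
    by (intro supnorm_least) (auto simp: c_def J_def)
  finally show ?thesis .
qed

lemma small_on_U_if_qnorm_less:
  assumes U: "ultrafilter_on I U" and x: "lbounded I x"
    and less: "qnorm I U x < e"
  shows "{i\<in>I. norm (x i) < e} \<in> U"
proof -
  have nonempty: "{c. cU I U c} \<noteq> {}" using cU_zero[OF U] by blast
  obtain c where c: "cU I U c" and s: "supnorm I (\<lambda>i. x i - c i) < e"
    using less unfolding qnorm_def cINF_less_iff[OF nonempty qnorm_bdd_below[OF U x]] by blast
  then obtain J where J: "J \<in> U" "\<forall>i\<in>J. norm (c i) < e - supnorm I (\<lambda>i. x i - c i)"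
    unfolding cU_def by (meson diff_gt_0_iff_gt)
  have "lbounded I (\<lambda>i. x i - c i)" using lbounded_diff x c unfolding cU_def by blast
  have "J \<subseteq> {i\<in>I. norm (x i) < e}"
  proof
    fix i assume "i \<in> J"
    then have "i \<in> I" using ultrafilter_on_subset[OF U J(1)] by blast
    have "norm (x i) \<le> norm (x i - c i) + norm (c i)"
      using norm_triangle_sub[of "x i" "c i"] by (simp add: add.commute)
    also have "\<dots> < supnorm I (\<lambda>i. x i - c i) + (e - supnorm I (\<lambda>i. x i - c i))"
      using supnorm_upper[OF \<open>lbounded I (\<lambda>i. x i - c i)\<close> \<open>i \<in> I\<close>] J(2) \<open>i \<in> J\<close>
      by (intro add_le_less_mono) auto
    finally show "i \<in> {i\<in>I. norm (x i) < e}" using \<open>i \<in> I\<close> by simp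
  qed
  then show ?thesis by (rule ultrafilter_on_mono[OF U J(1)]) blast
qed

definition orbit_S_continuous ::
    "'i set \<Rightarrow> 'i set set \<Rightarrow> (real \<Rightarrow> 'e::real_normed_vector \<Rightarrow> 'e) \<Rightarrow> ('i \<Rightarrow> 'e) \<Rightarrow> bool" where
  "orbit_S_continuous I U T f \<longleftrightarrow>
     (\<forall>\<epsilon>>0. \<exists>\<delta>>0. \<forall>t. 0 < t \<and> t < \<delta> \<longrightarrow> {i\<in>I. norm (T t (f i) - f i) < \<epsilon>} \<in> U)"

lemma Emax_eq: "Emax I U T = {f. ns_finite I U f \<and> orbit_S_continuous I U T f}"
  unfolding Emax_def orbit_S_continuous_def by simp

lemma orbit_S_continuous_iff_eventually:
  "orbit_S_continuous I U T f \<longleftrightarrow>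
     (\<forall>\<epsilon>>0. \<forall>\<^sub>F t in at_right 0. {i\<in>I. norm (T t (f i) - f i) < \<epsilon>} \<in> U)"
  unfolding orbit_S_continuous_def eventually_at_right_field by (simp add: imp_conjL)

lemma orbit_S_continuous_cong:
  assumes U: "ultrafilter_on I U" and eq: "{i\<in>I. f i = g i} \<in> U"
    and f: "orbit_S_continuous I U T f"
  shows "orbit_S_continuous I U T g"
  unfolding orbit_S_continuous_iff_eventually
proof (intro allI impI)
  fix \<epsilon> :: real assume "\<epsilon> > 0"
  with f have "\<forall>\<^sub>F t in at_right 0. {i\<in>I. norm (T t (f i) - f i) < \<epsilon>} \<in> U"
    unfolding orbit_S_continuous_iff_eventually by blast
  then show "\<forall>\<^sub>F t in at_right 0. {i\<in>I. norm (T t (g i) - g i) < \<epsilon>} \<in> U"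
  proof eventually_elim
    case (elim t)
    show ?case by (rule ultrafilter_on_Int_mono[OF U eq elim]) auto
  qed
qed

lemma tendsto_qnorm_orbit_iff:
  assumes T: "\<And>t. t > 0 \<Longrightarrow> bounded_linear (T t)"
    and U: "ultrafilter_on I U" and g: "lbounded I g"
  shows "((\<lambda>t. qnorm I U (\<lambda>i. T t (g i) - g i)) \<longlongrightarrow> 0) (at_right 0) \<longleftrightarrow>
    orbit_S_continuous I U T g"
proof -
  define q where "q t = qnorm I U (\<lambda>i. T t (g i) - g i)" for t
  have bounded: "\<forall>\<^sub>F t in at_right 0. lbounded I (\<lambda>i. T t (g i) - g i)"
    using eventually_at_right_less[of 0]
  proof eventually_elim
    case (elim t)
    then have "bounded_linear (T t)" by (rule T)
    then show ?case using lbounded_diff lbounded_bounded_linear g by blast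
  qed
  then have nonneg: "\<forall>\<^sub>F t in at_right 0. q t \<ge> 0"
    unfolding q_def by (rule eventually_mono) (rule qnorm_nonneg[OF U])
  have "(q \<longlongrightarrow> 0) (at_right 0) \<longleftrightarrow> (\<forall>\<epsilon>>0. \<forall>\<^sub>F t in at_right 0. q t < \<epsilon>)"
    unfolding tendsto_iff
  proof (intro iffI allI impI)
    fix \<epsilon> :: real
    assume "\<forall>\<epsilon>>0. \<forall>\<^sub>F t in at_right 0. dist (q t) 0 < \<epsilon>" and "\<epsilon> > 0"
    then have "\<forall>\<^sub>F t in at_right 0. dist (q t) 0 < \<epsilon>" by blast
    then show "\<forall>\<^sub>F t in at_right 0. q t < \<epsilon>"
      by eventually_elim (simp add: dist_real_def)
  next
    fix \<epsilon> :: real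
    assume "\<forall>\<epsilon>>0. \<forall>\<^sub>F t in at_right 0. q t < \<epsilon>" and "\<epsilon> > 0"
    then have "\<forall>\<^sub>F t in at_right 0. q t < \<epsilon>" by blast
    with nonneg show "\<forall>\<^sub>F t in at_right 0. dist (q t) 0 < \<epsilon>"
      by eventually_elim (simp add: dist_real_def)
  qed
  also have "\<dots> \<longleftrightarrow> orbit_S_continuous I U T g"
    unfolding orbit_S_continuous_iff_eventually
  proof (intro iffI allI impI)
    fix \<epsilon> :: real
    assume "\<forall>\<epsilon>>0. \<forall>\<^sub>F t in at_right 0. q t < \<epsilon>" and "\<epsilon> > 0"
    then have "\<forall>\<^sub>F t in at_right 0. q t < \<epsilon>" by blast
    with bounded show "\<forall>\<^sub>F t in at_right 0. {i\<in>I. norm (T t (g i) - g i) < \<epsilon>} \<in> U"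
      unfolding q_def by eventually_elim (rule small_on_U_if_qnorm_less[OF U])
  next
    fix \<epsilon> :: real
    assume "\<forall>\<epsilon>>0. \<forall>\<^sub>F t in at_right 0. {i\<in>I. norm (T t (g i) - g i) < \<epsilon>} \<in> U" and "\<epsilon> > 0"
    then have "\<forall>\<^sub>F t in at_right 0. {i\<in>I. norm (T t (g i) - g i) < \<epsilon> / 2} \<in> U"
      by (meson half_gt_zero)
    with bounded have "\<forall>\<^sub>F t in at_right 0. q t \<le> \<epsilon> / 2"
      unfolding q_def by eventually_elim (rule qnorm_le_if_small_on_U[OF U])
    then show "\<forall>\<^sub>F t in at_right 0. q t < \<epsilon>"
      using \<open>\<epsilon> > 0\<close> by (auto elim: eventually_mono)
  qed
  finally show ?thesis unfolding q_def .
qed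

lemma ns_infinitesimal_add:
  assumes U: "ultrafilter_on I U"
    and x: "ns_infinitesimal I U x" and y: "ns_infinitesimal I U y"
  shows "ns_infinitesimal I U (\<lambda>i. x i + y i)"
  unfolding ns_infinitesimal_def
proof (intro allI impI)
  fix n :: nat assume "n > 0"
  then have "2 * n > 0" by simp
  then have X: "{i\<in>I. norm (x i) < 1 / real (2 * n)} \<in> U"
    and Y: "{i\<in>I. norm (y i) < 1 / real (2 * n)} \<in> U"
    using x y unfolding ns_infinitesimal_def by blast+
  have "norm (x i + y i) < 1 / real n"
    if "norm (x i) < 1 / real (2 * n)" "norm (y i) < 1 / real (2 * n)" for i
  proof -
    have "norm (x i + y i) \<le> norm (x i) + norm (y i)" by (rule norm_triangle_ineq)
    also have "\<dots> < 1 / real (2 * n) + 1 / real (2 * n)" using that by (rule add_strict_mono)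
    also have "\<dots> = 1 / real n" by simp
    finally show ?thesis .
  qed
  then show "{i\<in>I. norm (x i + y i) < 1 / real n} \<in> U"
    by (intro ultrafilter_on_Int_mono[OF U X Y]) auto
qed

lemma ns_infinitesimal_minus: "ns_infinitesimal I U x \<Longrightarrow> ns_infinitesimal I U (\<lambda>i. - x i)"
  unfolding ns_infinitesimal_def by simp

lemma ns_infinitesimal_if_eq_on_U:
  assumes U: "ultrafilter_on I U" and eq: "{i\<in>I. f i = g i} \<in> U"
  shows "ns_infinitesimal I U (\<lambda>i. f i - g i)"
  unfolding ns_infinitesimal_def
  by (intro allI impI ultrafilter_on_mono[OF U eq]) auto

lemma cU_imp_ns_infinitesimal:
  assumes U: "ultrafilter_on I U" and c: "cU I U c"
  shows "ns_infinitesimal I U c"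
  unfolding ns_infinitesimal_def
proof (intro allI impI)
  fix n :: nat assume "n > 0"
  then obtain J where "J \<in> U" "\<forall>i\<in>J. norm (c i) < 1 / real n"
    using c unfolding cU_def by (meson of_nat_0_less_iff zero_less_divide_1_iff)
  then show "{i\<in>I. norm (c i) < 1 / real n} \<in> U"
    using ultrafilter_on_subset[OF U \<open>J \<in> U\<close>] by (intro ultrafilter_on_mono[OF U \<open>J \<in> U\<close>]) auto
qed

lemma hatclass_eq:
  assumes U: "ultrafilter_on I U" and fg: "ns_infinitesimal I U (\<lambda>i. f i - g i)"
  shows "hatclass I U f = hatclass I U g"
proof -
  have "ns_infinitesimal I U (\<lambda>i. h i - g i)" if "ns_infinitesimal I U (\<lambda>i. h i - f i)" for h
    using ns_infinitesimal_add[OF U that fg] by simp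
  moreover have "ns_infinitesimal I U (\<lambda>i. h i - f i)" if "ns_infinitesimal I U (\<lambda>i. h i - g i)" for h
    using ns_infinitesimal_add[OF U that ns_infinitesimal_minus[OF fg]] by simp
  ultimately show ?thesis unfolding hatclass_def by blast
qed

lemma Phi_qclass:
  assumes U: "ultrafilter_on I U" and g: "lbounded I g"
  shows "Phi I U (qclass I U g) = hatclass I U g"
proof -
  have "g \<in> qclass I U g" unfolding qclass_def using g cU_zero[OF U] by simp
  then have "(SOME h. h \<in> qclass I U g) \<in> qclass I U g"
    by (rule someI[where P = "\<lambda>h. h \<in> qclass I U g"])
  then have "cU I U (\<lambda>i. (SOME h. h \<in> qclass I U g) i - g i)"
    unfolding qclass_def by blast
  then show ?thesis
    unfolding Phi_def by (intro hatclass_eq[OF U] cU_imp_ns_infinitesimal[OF U])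
qed

lemma Emax_hat_eq_lbounded:
  assumes U: "ultrafilter_on I U"
  shows "Emax_hat I U T = {hatclass I U g | g. lbounded I g \<and> orbit_S_continuous I U T g}"
proof (intro equalityI subsetI)
  fix x assume "x \<in> Emax_hat I U T"
  then obtain f where x: "x = hatclass I U f" and "ns_finite I U f" "orbit_S_continuous I U T f"
    unfolding Emax_hat_def Emax_eq by blast
  moreover obtain g where "lbounded I g" and "{i\<in>I. f i = g i} \<in> U"
    using ns_finite_obtain_lbounded[OF U \<open>ns_finite I U f\<close>] by blast
  ultimately show "x \<in> {hatclass I U g | g. lbounded I g \<and> orbit_S_continuous I U T g}"
    using hatclass_eq[OF U ns_infinitesimal_if_eq_on_U[OF U]] orbit_S_continuous_cong[OF U]
    by blast
next
  fix x assume "x \<in> {hatclass I U g | g. lbounded I g \<and> orbit_S_continuous I U T g}"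
  then show "x \<in> Emax_hat I U T"
    unfolding Emax_hat_def Emax_eq using lbounded_imp_ns_finite[OF U] by blast
qed

theorem mainTheorem9:
  fixes T :: "real \<Rightarrow> 'e::banach \<Rightarrow> 'e"
    and I :: "'i set" and U :: "'i set set"
  assumes "sc_semigroup T"
    and "ultrafilter_on I U"
    and "countably_incomplete U"
  shows "Emax_hat I U T =
    Phi I U ` {qclass I U g | g. lbounded I g \<and>
       ((\<lambda>t. qnorm I U (\<lambda>i. T t (g i) - g i)) \<longlongrightarrow> 0) (at_right 0)}"
proof -
  have T: "\<And>t. t > 0 \<Longrightarrow> bounded_linear (T t)"
    using assms(1) unfolding sc_semigroup_def by simp
  have "Phi I U ` {qclass I U g | g. lbounded I g \<and>
       ((\<lambda>t. qnorm I U (\<lambda>i. T t (g i) - g i)) \<longlongrightarrow> 0) (at_right 0)}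
    = {hatclass I U g | g. lbounded I g \<and> orbit_S_continuous I U T g}"
    using Phi_qclass[OF assms(2)] tendsto_qnorm_orbit_iff[OF T assms(2)] by fastforce
  then show ?thesis using Emax_hat_eq_lbounded[OF assms(2)] by simp
qed

end
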